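(* Let $n\ge1$, $k\ge1$, $\mathcal{D}=\{0,\ldots,n\}$, and let $i\in\{0,\ldots,n\}$. Let $\mathbf{c}=\mathbf{W}_i0^{k-1}$ (the word $\mathbf{W}_i$ followed by $k-1$ zeros). Then for every $\mathbf{w}\in\mathcal{D}^k$, $$\#\{1\le j\le k\cdot(n+1)^k:\ c_j\cdots c_{j+k-1}=\mathbf{w}\}=k.$$
   Context: Let $\mathbf{w}_0,\mathbf{w}_1,\ldots,\mathbf{w}_{(n+1)^k-1}$ be the elements of $\mathcal{D}^k$ listed in strictly increasing lexicographic order (so $\mathbf{w}_0=0^k$, $\mathbf{w}_1=0^{k-1}1$, \ldots, $\mathbf{w}_{(n+1)^k-1}=n^k$). For $i=0,\ldots,n$ define the word (concatenation) $\mathbf{W}_i=\mathbf{w}_i\mathbf{w}_{i+1}\cdots\mathbf{w}_{(n+1)^k-1}\mathbf{w}_0\mathbf{w}_1\cdots\mathbf{w}_{i-1}$, a word of length $k\cdot(n+1)^k$ (with $\mathbf{W}_0=\mathbf{w}_0\mathbf{w}_1\cdots\mathbf{w}_{(n+1)^k-1}$). *)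

theory Defs
  imports Main "HOL-Library.List_Lexorder"
begin

text \<open>The alphabet D = {0..n}; words are lists. The list ordering from
List_Lexorder is the lexicographic order (on words of equal length k it is
the usual lexicographic order).\<close>

definition lex_words :: "nat \<Rightarrow> nat \<Rightarrow> nat list list" where
  "lex_words n k = sorted_list_of_set {xs. length xs = k \<and> set xs \<subseteq> {0..n}}"

definition bigW :: "nat \<Rightarrow> nat \<Rightarrow> nat \<Rightarrow> nat list" where
  "bigW n k i = concat (drop i (lex_words n k) @ take i (lex_words n k))"

end

(*
  Writing N = n + 1, the words of length k over {0..n} in lexicographic order are the
  k-digit base-N expansions of 0, 1, ..., N^k - 1, so W_i is the concatenation of the
  expansions of i, i + 1, ... taken cyclically mod N^k.  The k - 1 appended zeros are the
  first k - 1 digits of the expansion of i, i.e. of the block that would follow cyclically.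
  Hence the length-k factor starting at offset r < k inside the block of m consists of the
  last k - r digits of m followed by the first r digits of (m + 1) mod N^k.  For fixed r
  this map is injective on {0..<N^k}: the suffix determines m mod N^(k-r), the prefix then
  determines (m + 1) mod N^k.  Counting makes it a bijection onto D^k, so every word
  occurs exactly once at each of the k offsets.
*)
theory Submission
  imports Defs
begin

fun digits :: "nat \<Rightarrow> nat \<Rightarrow> nat \<Rightarrow> nat list" where
  "digits N 0 m = []"
| "digits N (Suc j) m = digits N j (m div N) @ [m mod N]"

lemma length_digits [simp]: "length (digits N j m) = j"
  by (induction j arbitrary: m) auto

lemma set_digits: "N > 0 \<Longrightarrow> set (digits N j m) \<subseteq> {0..<N}"
  by (induction j arbitrary: m) auto

lemma digits_zero: "digits N j 0 = replicate j 0"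
  by (induction j) (auto simp: replicate_append_same)

lemma digits_add:
  assumes "N > 0"
  shows "digits N (a + b) m = digits N a (m div N ^ b) @ digits N b m"
proof (induction b arbitrary: m)
  case 0
  then show ?case by simp
next
  case (Suc b)
  have "digits N (a + Suc b) m =
      digits N a (m div N div N ^ b) @ digits N b (m div N) @ [m mod N]"
    using Suc by simp
  also have "m div N div N ^ b = m div N ^ Suc b"
    by (simp add: div_mult2_eq)
  finally show ?case by simp
qed

lemma digits_Suc_Cons:
  "N > 0 \<Longrightarrow> digits N (Suc j) m = (m div N ^ j mod N) # digits N j m"
  using digits_add[of N 1 j m] by simp

lemma digits_eq_iff:
  "N > 0 \<Longrightarrow> digits N j m = digits N j m' \<longleftrightarrow> m mod N ^ j = m' mod N ^ j"
proof (induction j arbitrary: m m')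
  case 0
  then show ?case by simp
next
  case (Suc j)
  have split: "x mod N ^ Suc j = N * (x div N mod N ^ j) + x mod N" for x
    by (metis mod_mult2_eq power_Suc)
  have low_digit: "m mod N = m' mod N" if "m mod N ^ Suc j = m' mod N ^ Suc j"
    by (metis that mod_mod_cancel dvd_power Suc.prems zero_less_Suc)
  show ?case
    using Suc split[of m] split[of m'] low_digit by auto
qed

lemma digits_mod: "N > 0 \<Longrightarrow> digits N j (m mod N ^ j) = digits N j m"
  by (simp add: digits_eq_iff)

lemma digits_less:
  assumes "N > 0" "m < m'" "m' < N ^ j"
  shows "digits N j m < digits N j m'"
  using assms(2,3)
proof (induction j arbitrary: m m')
  case 0
  then show ?case by simp
next
  case (Suc j)
  have "m div N ^ j \<le> m' div N ^ j"
    using Suc.prems by (simp add: div_le_mono)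
  moreover have "m' div N ^ j < N"
    using Suc.prems by (simp add: less_mult_imp_div_less)
  moreover have "digits N j m < digits N j m'" if "m div N ^ j = m' div N ^ j"
  proof -
    have "m mod N ^ j < m' mod N ^ j"
      using that Suc.prems by (metis add_less_cancel_left div_mult_mod_eq)
    then have "digits N j (m mod N ^ j) < digits N j (m' mod N ^ j)"
      using Suc.IH assms(1) by simp
    then show ?thesis
      using assms(1) by (simp add: digits_mod)
  qed
  ultimately show ?case
    using assms(1) Suc.prems by (auto simp: digits_Suc_Cons simp del: digits.simps(2))
qed

lemma lex_words_eq_map_digits:
  "lex_words n k = map (digits (Suc n) k) [0..<Suc n ^ k]"
proof -
  let ?A = "{xs. length xs = k \<and> set xs \<subseteq> {0..n}}"
  let ?l = "map (digits (Suc n) k) [0..<Suc n ^ k]"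
  have fin: "finite ?A"
    using finite_lists_length_eq[of "{0..n}" k] by (simp add: conj_commute)
  have card: "card ?A = length ?l"
    using card_lists_length_eq[of "{0..n}" k] by (simp add: conj_commute)
  have sorted: "sorted_wrt (<) ?l"
    by (auto simp: sorted_wrt_map sorted_wrt_iff_nth_less intro!: digits_less)
  have "set ?l = ?A"
  proof (rule card_subset_eq[OF fin])
    show "set ?l \<subseteq> ?A"
      using set_digits[of "Suc n" k] by fastforce
    have "distinct ?l"
      using sorted strict_sorted_iff by blast
    then show "card (set ?l) = card ?A"
      unfolding card by (rule distinct_card)
  qed
  then show ?thesis
    unfolding lex_words_def using sorted_list_of_set_unique[OF fin, of ?l] sorted card by simp
qed

lemma rotate_upt: "rotate i [0..<M] = map (\<lambda>q. (q + i) mod M) [0..<M]"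
  by (rule nth_equalityI) (simp_all add: nth_rotate add.commute)

lemma bigW_eq_concat_digits:
  assumes "i < Suc n ^ k"
  shows "bigW n k i =
    concat (map (\<lambda>q. digits (Suc n) k ((q + i) mod Suc n ^ k)) [0..<Suc n ^ k])"
proof -
  have "drop i (lex_words n k) @ take i (lex_words n k) = rotate i (lex_words n k)"
    using assms by (simp add: rotate_drop_take lex_words_eq_map_digits)
  then show ?thesis
    unfolding bigW_def by (simp add: lex_words_eq_map_digits rotate_map rotate_upt comp_def)
qed

lemma drop_concat_blocks:
  assumes "\<forall>b\<in>set bs. length b = k"
  shows "drop (q * k) (concat bs) = concat (drop q bs)"
  using assms
proof (induction bs arbitrary: q)
  case Nil
  then show ?case by simp
next
  case (Cons b bs)
  then show ?case by (cases q) (simp_all add: add.commute[of k])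
qed

lemma take_drop_concat_blocks:
  assumes "\<forall>b\<in>set bs. length b = k" "Suc q < length bs" "r \<le> k"
  shows "take k (drop (q * k + r) (concat bs)) = drop r (bs ! q) @ take r (bs ! Suc q)"
proof -
  have "drop q bs = bs ! q # bs ! Suc q # drop (Suc (Suc q)) bs"
    using assms(2) by (simp add: Cons_nth_drop_Suc)
  moreover have "length (bs ! q) = k" "length (bs ! Suc q) = k"
    using assms(1,2) by simp_all
  ultimately show ?thesis
    using assms(3) drop_concat_blocks[OF assms(1), of q]
    by (simp add: add.commute[of "q * k"] drop_drop[symmetric] take_append)
qed

definition digit_window :: "nat \<Rightarrow> nat \<Rightarrow> nat \<Rightarrow> nat \<Rightarrow> nat list" where
  "digit_window N k r m = drop r (digits N k m) @ take r (digits N k (Suc m mod N ^ k))"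

lemma window_bigW_padded:
  assumes "i \<le> n" "q < Suc n ^ k" "r < k"
  shows "take k (drop (q * k + r) (bigW n k i @ replicate (k - 1) 0)) =
    digit_window (Suc n) k r ((q + i) mod Suc n ^ k)"
proof -
  define N M where "N = Suc n" and "M = N ^ k"
  define B where "B = (\<lambda>q. digits N k ((q + i) mod M))"
  have "N \<le> M"
    unfolding M_def N_def using assms(3) by (simp add: self_le_power)
  then have "i < M"
    using assms(1) N_def by simp
  have last_block: "B M = replicate (k - 1) 0 @ [i]"
    using \<open>i < M\<close> assms(1,3) digits_add[of N "k - 1" 1 i]
    by (simp add: B_def N_def digits_zero)
  have "bigW n k i = concat (map B [0..<M])"
    using bigW_eq_concat_digits[of i n k] \<open>i < M\<close> by (simp add: B_def M_def N_def)
  moreover have "length (concat (map B [0..<M])) = k * M"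
    by (simp add: length_concat B_def comp_def sum_list_triv)
  ultimately have "bigW n k i @ replicate (k - 1) 0 =
      take (k * M + (k - 1)) (concat (map B [0..<Suc M]))"
    using last_block by (simp add: take_append)
  moreover have "k \<le> k * M + (k - 1) - (q * k + r)"
  proof -
    have "Suc q * k \<le> M * k"
      using assms(2) unfolding M_def N_def by (intro mult_le_mono1) simp
    then show ?thesis
      using assms(3) by (simp add: mult.commute)
  qed
  ultimately have "take k (drop (q * k + r) (bigW n k i @ replicate (k - 1) 0)) =
      take k (drop (q * k + r) (concat (map B [0..<Suc M])))"
    by (simp only: drop_take take_take min_absorb1)
  also have "\<dots> = drop r (map B [0..<Suc M] ! q) @ take r (map B [0..<Suc M] ! Suc q)"
    using assms(2,3) by (subst take_drop_concat_blocks) (simp_all add: B_def M_def N_def)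
  also have "\<dots> = digit_window N k r ((q + i) mod M)"
    using assms(2) by (simp add: B_def M_def N_def digit_window_def mod_Suc_eq del: upt_Suc)
  finally show ?thesis
    unfolding M_def N_def .
qed

lemma bij_betw_add_mod: "bij_betw (\<lambda>q. (q + i) mod M) {..<M} {..<M::nat}"
proof -
  have "distinct (map (\<lambda>q. (q + i) mod M) [0..<M])"
    and "set (map (\<lambda>q. (q + i) mod M) [0..<M]) = {..<M}"
    unfolding rotate_upt[symmetric] by auto
  then show ?thesis
    by (simp add: bij_betw_def distinct_map atLeast0LessThan)
qed

lemma inj_on_digit_window:
  assumes "N > 0" "r < k"
  shows "inj_on (digit_window N k r) {..<N ^ k}"
proof (rule inj_onI)
  fix m m' assume m: "m \<in> {..<N ^ k}" and m': "m' \<in> {..<N ^ k}"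
    and eq: "digit_window N k r m = digit_window N k r m'"
  define s where "s = k - r"
  have k: "k = r + s"
    using assms(2) s_def by simp
  have split: "digits N k x = digits N r (x div N ^ s) @ digits N s x" for x
    using digits_add[OF assms(1), of r s x] k by simp
  have window: "digit_window N k r x =
      digits N s x @ digits N r (Suc x mod N ^ k div N ^ s)" for x
    unfolding digit_window_def split by simp
  have high_bound: "Suc x mod N ^ k div N ^ s < N ^ r" for x
    using assms(1) k by (simp add: less_mult_imp_div_less power_add mult.commute)
  from eq have "digits N s m = digits N s m'"
    and "digits N r (Suc m mod N ^ k div N ^ s) = digits N r (Suc m' mod N ^ k div N ^ s)"
    unfolding window by auto
  then have low: "m mod N ^ s = m' mod N ^ s"
    and high: "Suc m mod N ^ k div N ^ s = Suc m' mod N ^ k div N ^ s"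
    using assms(1) high_bound[of m] high_bound[of m'] by (simp_all add: digits_eq_iff)
  have "Suc x mod N ^ k mod N ^ s = Suc (x mod N ^ s) mod N ^ s" for x
    using k by (simp add: mod_mod_cancel mod_Suc_eq power_add)
  then have "Suc m mod N ^ k mod N ^ s = Suc m' mod N ^ k mod N ^ s"
    using low by simp
  then have "(m + 1) mod N ^ k = (m' + 1) mod N ^ k"
    using high by (metis div_mult_mod_eq Suc_eq_plus1)
  then show "m = m'"
    using m m' bij_betw_add_mod[of 1 "N ^ k"] by (auto simp: bij_betw_def dest: inj_onD)
qed

lemma bij_betw_digit_window:
  assumes "N > 0" "r < k"
  shows "bij_betw (digit_window N k r) {..<N ^ k} {xs. length xs = k \<and> set xs \<subseteq> {0..<N}}"
  unfolding bij_betw_def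
proof
  show inj: "inj_on (digit_window N k r) {..<N ^ k}"
    using assms by (rule inj_on_digit_window)
  let ?A = "{xs. length xs = k \<and> set xs \<subseteq> {0..<N}}"
  have "finite ?A"
    using finite_lists_length_eq[of "{0..<N}" k] by (simp add: conj_commute)
  moreover have "digit_window N k r ` {..<N ^ k} \<subseteq> ?A"
    using set_digits[OF assms(1), of k]
    by (fastforce simp: digit_window_def dest: in_set_dropD in_set_takeD)
  moreover have "card (digit_window N k r ` {..<N ^ k}) = card ?A"
    using card_image[OF inj] card_lists_length_eq[of "{0..<N}" k] by (simp add: conj_commute)
  ultimately show "digit_window N k r ` {..<N ^ k} = ?A"
    by (rule card_subset_eq)
qed

lemma card_fiber_bij_betw:
  assumes "bij_betw f S T" "t \<in> T"
  shows "card {s \<in> S. f s = t} = 1"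
proof -
  obtain s where "s \<in> S" "f s = t"
    using assms by (auto simp: bij_betw_def)
  then have "{s \<in> S. f s = t} = {s}"
    using assms(1) by (auto simp: bij_betw_def dest: inj_onD)
  then show ?thesis
    by simp
qed

lemma card_blocks_sum:
  fixes M k :: nat
  assumes "k > 0"
  shows "card {p \<in> {..<M * k}. P p} = (\<Sum>r<k. card {q \<in> {..<M}. P (q * k + r)})"
proof -
  let ?T = "SIGMA r:{..<k}. {q \<in> {..<M}. P (q * k + r)}"
  have "bij_betw (\<lambda>(r, q). q * k + r) ?T {p \<in> {..<M * k}. P p}"
  proof (rule bij_betw_byWitness[where f' = "\<lambda>p. (p mod k, p div k)"])
    show "(\<lambda>(r, q). q * k + r) ` ?T \<subseteq> {p \<in> {..<M * k}. P p}"
    proof (clarsimp)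
      fix r q assume "r < k" "q < M"
      then have "q * k + r < Suc q * k" by simp
      also have "\<dots> \<le> M * k" using \<open>q < M\<close> by (intro mult_le_mono1) simp
      finally show "q * k + r < M * k" .
    qed
  qed (auto simp: assms less_mult_imp_div_less)
  then have "card {p \<in> {..<M * k}. P p} = card ?T"
    by (simp add: bij_betw_same_card)
  then show ?thesis
    by simp
qed

lemma card_bigW_windows_at_offset:
  assumes "i \<le> n" "r < k" "length w = k" "set w \<subseteq> {0..n}"
  shows "card {q \<in> {..<Suc n ^ k}.
    take k (drop (q * k + r) (bigW n k i @ replicate (k - 1) 0)) = w} = 1"
proof -
  define N M where "N = Suc n" and "M = N ^ k"
  have bij: "bij_betw (digit_window N k r \<circ> (\<lambda>q. (q + i) mod M)) {..<M}
      {xs. length xs = k \<and> set xs \<subseteq> {0..<N}}"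
    using bij_betw_add_mod bij_betw_digit_window[of N r k] assms(2)
    unfolding M_def N_def by (blast intro: bij_betw_trans)
  have w: "w \<in> {xs. length xs = k \<and> set xs \<subseteq> {0..<N}}"
    using assms(3,4) by (simp add: N_def atLeastLessThanSuc_atLeastAtMost)
  have "take k (drop (q * k + r) (bigW n k i @ replicate (k - 1) 0)) =
      (digit_window N k r \<circ> (\<lambda>q. (q + i) mod M)) q" if "q < M" for q
    using window_bigW_padded[of i n q k r] assms(1,2) that by (simp add: M_def N_def)
  then have "{q \<in> {..<M}. take k (drop (q * k + r) (bigW n k i @ replicate (k - 1) 0)) = w} =
      {q \<in> {..<M}. (digit_window N k r \<circ> (\<lambda>q. (q + i) mod M)) q = w}"
    by auto
  then show ?thesis
    using card_fiber_bij_betw[OF bij w] by (simp add: M_def N_def)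
qed

theorem lemma2p1:
  fixes n k i :: nat and c w :: "nat list"
  assumes "n \<ge> 1" and "k \<ge> 1" and "i \<le> n"
    and "c = bigW n k i @ replicate (k - 1) 0"
    and "length w = k" and "set w \<subseteq> {0..n}"
  shows "card {j \<in> {1..k * (n + 1) ^ k}. take k (drop (j - 1) c) = w} = k"
proof -
  define M where "M = Suc n ^ k"
  have "{j \<in> {1..k * (n + 1) ^ k}. take k (drop (j - 1) c) = w} =
      Suc ` {p \<in> {..<M * k}. take k (drop p c) = w}"
    by (force simp: M_def mult.commute image_iff)
  then have "card {j \<in> {1..k * (n + 1) ^ k}. take k (drop (j - 1) c) = w} =
      card {p \<in> {..<M * k}. take k (drop p c) = w}"
    by (simp add: card_image)
  also have "\<dots> = (\<Sum>r<k. card {q \<in> {..<M}. take k (drop (q * k + r) c) = w})"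
    using assms(2) card_blocks_sum[of k M "\<lambda>p. take k (drop p c) = w"] by simp
  also have "\<dots> = k"
    using card_bigW_windows_at_offset[of i n _ k w] assms(3-6) by (simp add: M_def)
  finally show ?thesis .
qed

end
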